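(* Let $\widehat{\mathbf M}=(\hat{\mathbb X},\hat{\mathbb U},\mathbb Y,\hat x_0,\hat{\mathbf t},\hat h)$ and $\mathbf M=(\mathbb X,\mathbb U,\mathbb Y,x_0,\mathbf t,h)$ be gMDPs with $\widehat{\mathbf M}\preceq^\delta_\epsilon\mathbf M$ via relation $\mathcal R$, interface $\mathcal U_v$ and lifted kernel $\mathbb W_{\mathbf t}$, let $\psi$ be an scLTL formula with DFA $\mathcal A_\psi=(Q,q_0,\Sigma,F,\tau)$, and let $\mu:\hat{\mathbb X}\times Q\to\hat{\mathbb U}$ be a mapping. Let $V:\hat{\mathbb X}\times Q\to[0,1]$ and $V_{\|}:\hat{\mathbb X}\times\mathbb X\times Q\to[0,1]$ satisfy $V(\hat x,q)\le V_{\|}(\hat x,x,q)$ for all $(\hat x,x)\in\mathcal R$ and $q\in Q$. Then $$\mathbf T^\mu_{\epsilon,\delta}(V)(\hat x,q)\le\mathbf T^\mu(V_{\|})(\hat x,x,q)\qquad\forall(\hat x,x)\in\mathcal R,\ q\in Q,$$ where $\mathbf T^\mu_{\epsilon,\delta}$ is the $(\epsilon,\delta)$-robust operator with respect to $\widehat{\mathbf M}$ and $\mathbf T^\mu$ is the Bellman operator with respect to $(\widehat{\mathbf M}\|_{\mathcal R}\mathbf M)\otimes\mathcal A_\psi$.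
   Context: A gMDP is $(\mathbb X,\mathbb U,\mathbb Y,x_0,\mathbf t,h)$ with Polish state/input spaces, output space $\mathbb Y$ with metric $\mathbf d_{\mathbb Y}$, initial state, stochastic kernel $\mathbf t(\cdot\mid x,u)$ and measurable output map $h$. $\widehat{\mathbf M}\preceq^\delta_\epsilon\mathbf M$ means there exist an interface $\mathcal U_v:\hat{\mathbb U}\times\hat{\mathbb X}\times\mathbb X\to\mathcal P(\mathbb U)$, a measurable relation $\mathcal R\subseteq\hat{\mathbb X}\times\mathbb X$ and a Borel kernel $\mathbb W_{\mathbf t}(\cdot\mid\hat u,\hat x,x)$ on $\hat{\mathbb X}\times\mathbb X$ with $(\hat x_0,x_0)\in\mathcal R$ and, for all $(\hat x,x)\in\mathcal R$: $\mathbf d_{\mathbb Y}(\hat h(\hat x),h(x))\le\epsilon$, and for all $\hat u$, $\mathbb W=\mathbb W_{\mathbf t}(\cdot\mid\hat u,\hat x,x)$ has marginals $\hat{\mathbf t}(\cdot\mid\hat x,\hat u)$ on $\hat{\mathbb X}$ and $\mathbf t(\cdot\mid x,\mathcal U_v(\hat u,\hat x,x))$ on $\mathbb X$, and $\mathbb W(\mathcal R)\ge1-\delta$. The coupling gMDP $\widehat{\mathbf M}\|_{\mathcal R}\mathbf M$ has state space $\hat{\mathbb X}\times\mathbb X$, input space $\hat{\mathbb U}$, initial state $(\hat x_0,x_0)$, kernel $\mathbb W_{\mathbf t}$ and output map $(\hat x,x)\mapsto h(x)$. $\Sigma=2^{\mathsf{AP}}$, $\mathsf L:\mathbb Y\to\Sigma$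 measurable labelling, $\mathcal A_\psi$ a DFA (accepting set $F$, transition $\tau:Q\times\Sigma\to Q$) for $\psi$. The product $(\widehat{\mathbf M}\|_{\mathcal R}\mathbf M)\otimes\mathcal A_\psi$ has states $\hat{\mathbb X}\times\mathbb X\times Q$ and kernel $\mathbf 1_{\{q'\}}(\tau(q,\mathsf L(h(x'))))\,\mathbb W_{\mathbf t}(d\hat x'\times dx'\mid\hat u,\hat x,x)$; its Bellman operator is $\mathbf T^\mu(V_{\|})(\hat x,x,q)=\int\max\{\mathbf 1_F(q'),V_{\|}(\hat x',x',q')\}$ against this kernel with $\hat u=\mu(\hat x,q)$. With $\mathcal N_\epsilon(y)=\{y'\in\mathbb Y:\mathbf d_{\mathbb Y}(y',y)\le\epsilon\}$ and $\bar\tau(q,\hat x')=\{\tau(q,\alpha):\alpha\in\mathsf L(\mathcal N_\epsilon(\hat h(\hat x')))\}$, the $(\epsilon,\delta)$-robust operator is $\mathbf T^\mu_{\epsilon,\delta}(V)(\hat x,q)=\mathbf L\big(\int_{\hat{\mathbb X}}\min_{q'\in\bar\tau(q,\hat x')}\max\{\mathbf 1_F(q'),V(\hat x',q')\}\,\hat{\mathbf t}(d\hat x'\mid\hat x,\mu(\hat x,q))-\delta\big)$ with $\mathbf L(r)=\min(1,\max(0,r))$. *)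

theory Defs
  imports "HOL-Probability.Probability"
begin

text \<open>A gMDP with Polish state space 'x, Polish input space 'u, metric output space 'y:
  the stochastic kernel t(. | x,u) is a Borel probability kernel and the output map h is measurable.
  (The initial state is passed separately where needed.)\<close>
definition gmdp_kernel ::
  "('x::polish_space \<Rightarrow> 'u::polish_space \<Rightarrow> 'x measure) \<Rightarrow> ('x \<Rightarrow> 'y::metric_space) \<Rightarrow> bool" where
  "gmdp_kernel t h \<longleftrightarrow>
     (\<forall>x u. prob_space (t x u) \<and> sets (t x u) = sets borel) \<and>
     (\<lambda>(x, u). t x u) \<in> borel \<rightarrow>\<^sub>M prob_algebra borel \<and>
     h \<in> borel \<rightarrow>\<^sub>M borel"

text \<open>Approximate simulation relation  Mhat \<preceq>^delta_eps M  via interface Uv, relation R and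
  lifted kernel W. Here t(. | x, Uv(uh,xh,x)) is the mixture of t(. | x,u) over u ~ Uv(uh,xh,x).\<close>
definition approx_sim ::
  "real \<Rightarrow> real
   \<Rightarrow> ('xh::polish_space \<Rightarrow> 'uh::polish_space \<Rightarrow> 'xh measure) \<Rightarrow> ('xh \<Rightarrow> 'y::metric_space) \<Rightarrow> 'xh
   \<Rightarrow> ('x::polish_space \<Rightarrow> 'u::polish_space \<Rightarrow> 'x measure) \<Rightarrow> ('x \<Rightarrow> 'y) \<Rightarrow> 'x
   \<Rightarrow> ('uh \<Rightarrow> 'xh \<Rightarrow> 'x \<Rightarrow> 'u measure)
   \<Rightarrow> ('xh \<times> 'x) set
   \<Rightarrow> ('uh \<Rightarrow> 'xh \<Rightarrow> 'x \<Rightarrow> ('xh \<times> 'x) measure) \<Rightarrow> bool" where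
  "approx_sim eps delta that hh xh0 t h x0 Uv R W \<longleftrightarrow>
     R \<in> sets (borel :: ('xh \<times> 'x) measure) \<and>
     (\<lambda>(uh, xh, x). W uh xh x) \<in> borel \<rightarrow>\<^sub>M subprob_algebra borel \<and>
     (\<forall>uh xh x. prob_space (Uv uh xh x) \<and> sets (Uv uh xh x) = sets borel) \<and>
     (\<forall>uh xh x. sets (W uh xh x) = sets borel) \<and>
     (xh0, x0) \<in> R \<and>
     (\<forall>(xh, x) \<in> R. dist (hh xh) (h x) \<le> eps \<and>
        (\<forall>uh. distr (W uh xh x) borel fst = that xh uh \<and>
              distr (W uh xh x) borel snd = (Uv uh xh x \<bind> (\<lambda>u. t x u)) \<and>
              measure (W uh xh x) R \<ge> 1 - delta))"

definition clip01 :: "real \<Rightarrow> real" where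
  "clip01 r = min 1 (max 0 r)"

definition tau_bar ::
  "('q \<Rightarrow> 'ap set \<Rightarrow> 'q) \<Rightarrow> ('y::metric_space \<Rightarrow> 'ap set) \<Rightarrow> ('xh \<Rightarrow> 'y) \<Rightarrow> real \<Rightarrow> 'q \<Rightarrow> 'xh \<Rightarrow> 'q set" where
  "tau_bar tau Lab hh eps q xh' = {tau q alpha | alpha. alpha \<in> Lab ` {y. dist y (hh xh') \<le> eps}}"

definition robust_op ::
  "('xh::polish_space \<Rightarrow> 'uh \<Rightarrow> 'xh measure) \<Rightarrow> ('xh \<Rightarrow> 'y::metric_space) \<Rightarrow> ('y \<Rightarrow> 'ap set)
   \<Rightarrow> ('q::finite \<Rightarrow> 'ap set \<Rightarrow> 'q) \<Rightarrow> 'q set \<Rightarrow> real \<Rightarrow> real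
   \<Rightarrow> ('xh \<Rightarrow> 'q \<Rightarrow> 'uh) \<Rightarrow> ('xh \<Rightarrow> 'q \<Rightarrow> real) \<Rightarrow> 'xh \<Rightarrow> 'q \<Rightarrow> real" where
  "robust_op that hh Lab tau F eps delta mu V xh q =
     clip01 ((\<integral>xh'. Min ((\<lambda>q'. max (indicator F q') (V xh' q')) ` tau_bar tau Lab hh eps q xh')
               \<partial>(that xh (mu xh q))) - delta)"

text \<open>The Bellman operator of the product (Mhat ||_R M) \<otimes> A_psi; the coupling has output map
  (xh,x) \<mapsto> h x.\<close>
definition bellman_op ::
  "('uh \<Rightarrow> 'xh \<Rightarrow> 'x \<Rightarrow> ('xh::polish_space \<times> 'x::polish_space) measure) \<Rightarrow> ('x \<Rightarrow> 'y) \<Rightarrow> ('y \<Rightarrow> 'ap set)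
   \<Rightarrow> ('q \<Rightarrow> 'ap set \<Rightarrow> 'q) \<Rightarrow> 'q set
   \<Rightarrow> ('xh \<Rightarrow> 'q \<Rightarrow> 'uh) \<Rightarrow> ('xh \<Rightarrow> 'x \<Rightarrow> 'q \<Rightarrow> real) \<Rightarrow> 'xh \<Rightarrow> 'x \<Rightarrow> 'q \<Rightarrow> real" where
  "bellman_op W h Lab tau F mu Vp xh x q =
     (\<integral>z. max (indicator F (tau q (Lab (h (snd z))))) (Vp (fst z) (snd z) (tau q (Lab (h (snd z)))))
        \<partial>(W (mu xh q) xh x))"

end

theory Submission
  imports Defs
begin

text \<open>Whenever the coupled pair (xh', x') lies in R, the output of x' is eps-close to that of xh',
  so the automaton successor of x' is one of the states over which the robust operator minimises;
  hence its integrand is bounded by the Bellman integrand on R and by 1 off R. Integrating over the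
  lifted kernel, whose first marginal is the abstract kernel, costs at most the mass delta of the
  complement of R, and clipping to [0, 1] preserves the inequality because the Bellman value is
  nonnegative.\<close>

lemma clip01_le: "r \<le> s \<Longrightarrow> 0 \<le> s \<Longrightarrow> clip01 r \<le> s"
  by (simp add: clip01_def)

lemma (in subprob_space) integral_le_add_measure_compl:
  fixes f g :: "'a \<Rightarrow> real"
  assumes "R \<in> sets M" "integrable M f" "integrable M g"
    and "\<And>z. z \<in> space M \<Longrightarrow> g z \<le> f z + indicator (space M - R) z"
  shows "integral\<^sup>L M g \<le> integral\<^sup>L M f + (1 - measure M R)"
proof -
  have compl: "space M - R \<in> sets M"
    using assms(1) by blast
  have "integral\<^sup>L M g \<le> integral\<^sup>L M (\<lambda>z. f z + indicator (space M - R) z)"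
    using assms(2-4) compl
    by (intro integral_mono) (auto intro!: integrable_real_indicator simp: less_top[symmetric])
  also have "\<dots> = integral\<^sup>L M f + measure M (space M - R)"
    using assms(2) compl
    by (subst Bochner_Integration.integral_add)
      (auto intro!: integrable_real_indicator simp: less_top[symmetric])
  also have "measure M (space M - R) = measure M (space M) - measure M R"
    using assms(1) by (rule finite_measure_compl)
  finally show ?thesis
    using subprob_measure_le_1[of "space M"] by linarith
qed

lemma integral_distr_fst_le:
  fixes f :: "'a::second_countable_topology \<times> 'b::second_countable_topology \<Rightarrow> real"
    and g :: "'a \<Rightarrow> real"
  assumes "subprob_space M" and sets: "sets M = sets borel"
    and "R \<in> sets M" "integrable M f" "\<And>z. 0 \<le> f z"
    and le: "\<And>z. g (fst z) \<le> f z + indicator (- R) z"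
  shows "integral\<^sup>L (distr M borel fst) g \<le> integral\<^sup>L M f + (1 - measure M R)"
proof -
  interpret subprob_space M by fact
  show ?thesis
  proof (cases "integrable (distr M borel fst) g")
    case True
    have space: "space M = UNIV"
      using sets_eq_imp_space_eq[OF sets] by simp
    have fst: "fst \<in> M \<rightarrow>\<^sub>M borel"
      by (simp add: measurable_cong_sets[OF sets refl] borel_prod[symmetric])
    have g: "g \<in> borel_measurable borel"
      using borel_measurable_integrable[OF True] by simp
    have "integral\<^sup>L (distr M borel fst) g = integral\<^sup>L M (\<lambda>z. g (fst z))"
      using fst g by (rule integral_distr)
    also have "\<dots> \<le> integral\<^sup>L M f + (1 - measure M R)"
    proof (rule integral_le_add_measure_compl)
      show "integrable M (\<lambda>z. g (fst z))"
        using True integrable_distr_eq[OF fst g] by simp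
    qed (use assms le space in \<open>auto simp: Compl_eq_Diff_UNIV\<close>)
    finally show ?thesis .
  next
    case False
    \<comment> \<open>then the left-hand side is the junk value 0, so g need not even be measurable\<close>
    then show ?thesis
      using Bochner_Integration.integral_nonneg[of M f] assms(5) subprob_measure_le_1[of R]
      by (simp add: not_integrable_integral_eq)
  qed
qed

lemma approx_sim_lifted_kernel:
  assumes "approx_sim eps delta that hh xh0 t h x0 Uv R W" "(xh, x) \<in> R"
  shows "subprob_space (W uh xh x)" "sets (W uh xh x) = sets borel" "R \<in> sets (W uh xh x)"
    "distr (W uh xh x) borel fst = that xh uh" "1 - delta \<le> measure (W uh xh x) R"
proof -
  have "(\<lambda>(uh, xh, x). W uh xh x) \<in> borel \<rightarrow>\<^sub>M subprob_algebra borel"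
    using assms(1) unfolding approx_sim_def by blast
  from measurable_space[OF this, of "(uh, xh, x)"]
  show "subprob_space (W uh xh x)"
    by (simp add: space_subprob_algebra)
qed (use assms in \<open>auto simp: approx_sim_def\<close>)

lemma approx_sim_dist_le:
  "approx_sim eps delta that hh xh0 t h x0 Uv R W \<Longrightarrow> (xh, x) \<in> R \<Longrightarrow> dist (hh xh) (h x) \<le> eps"
  unfolding approx_sim_def by auto

lemma approx_sim_eps_nonneg:
  assumes "approx_sim eps delta that hh xh0 t h x0 Uv R W"
  shows "0 \<le> eps"
proof -
  have "(xh0, x0) \<in> R"
    using assms unfolding approx_sim_def by blast
  with assms show ?thesis
    by (meson approx_sim_dist_le order_trans zero_le_dist)
qed

lemma Min_tau_bar_le:
  fixes tau :: "'q::finite \<Rightarrow> 'ap set \<Rightarrow> 'q" and f :: "'q \<Rightarrow> real"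
  assumes "dist y (hh xh') \<le> eps"
  shows "Min (f ` tau_bar tau Lab hh eps q xh') \<le> f (tau q (Lab y))"
proof (rule Min_le)
  show "f (tau q (Lab y)) \<in> f ` tau_bar tau Lab hh eps q xh'"
    using assms unfolding tau_bar_def by blast
qed simp

lemma robust_integrand_le_bellman_integrand:
  fixes tau :: "'q::finite \<Rightarrow> 'ap set \<Rightarrow> 'q"
    and V :: "'xh \<Rightarrow> 'q \<Rightarrow> real" and Vp :: "'xh \<Rightarrow> 'x \<Rightarrow> 'q \<Rightarrow> real"
  assumes "0 \<le> eps"
    and "\<And>xh' x'. (xh', x') \<in> R \<Longrightarrow> dist (hh xh') (h x') \<le> eps"
    and "\<And>xh' x' q'. (xh', x') \<in> R \<Longrightarrow> V xh' q' \<le> Vp xh' x' q'"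
    and "\<And>xh' q'. V xh' q' \<le> 1"
    and "\<And>xh' x' q'. 0 \<le> Vp xh' x' q'"
  shows "Min ((\<lambda>q'. max (indicator F q') (V xh' q')) ` tau_bar tau Lab hh eps q xh')
           \<le> max (indicator F (tau q (Lab (h x')))) (Vp xh' x' (tau q (Lab (h x'))))
             + indicator (- R) (xh', x')"
    (is "?G \<le> _")
proof (cases "(xh', x') \<in> R")
  case True
  then have "dist (h x') (hh xh') \<le> eps"
    using assms(2) by (simp add: dist_commute)
  then have "?G \<le> max (indicator F (tau q (Lab (h x')))) (V xh' (tau q (Lab (h x'))))"
    by (rule Min_tau_bar_le)
  also have "\<dots> \<le> max (indicator F (tau q (Lab (h x')))) (Vp xh' x' (tau q (Lab (h x'))))"
    using assms(3)[OF True] by (rule max.mono[OF order_refl])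
  finally show ?thesis
    using True by simp
next
  case False
  have "?G \<le> max (indicator F (tau q (Lab (hh xh')))) (V xh' (tau q (Lab (hh xh'))))"
    using assms(1) by (intro Min_tau_bar_le) simp
  also have "\<dots> \<le> 1"
    using assms(4) by (simp add: indicator_def)
  finally have "?G \<le> 1" .
  moreover have "0 \<le> max (indicator F (tau q (Lab (h x')))) (Vp xh' x' (tau q (Lab (h x'))))"
    using assms(5) by (simp add: le_max_iff_disj)
  ultimately show ?thesis
    using False by simp
qed

lemma bellman_integrand_measurable:
  fixes tau :: "'q::finite \<Rightarrow> 'ap set \<Rightarrow> 'q"
    and h :: "'x::second_countable_topology \<Rightarrow> 'y::topological_space"
    and Vp :: "'xh::second_countable_topology \<Rightarrow> 'x \<Rightarrow> 'q \<Rightarrow> real"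
  assumes h: "h \<in> borel_measurable borel"
    and Lab: "Lab \<in> borel \<rightarrow>\<^sub>M count_space UNIV"
    and Vp: "\<And>q'. (\<lambda>(xh, x). Vp xh x q') \<in> borel_measurable borel"
  shows "(\<lambda>z. max (indicator F (tau q (Lab (h (snd z))))) (Vp (fst z) (snd z) (tau q (Lab (h (snd z))))))
           \<in> borel_measurable borel"
proof (rule measurable_compose_countable'[where g = "\<lambda>z. tau q (Lab (h (snd z)))"])
  show "(\<lambda>z. max (indicator F q') (Vp (fst z) (snd z) q')) \<in> borel_measurable borel" for q'
    using Vp[of q'] by (simp add: case_prod_beta')
  have "snd \<in> (borel :: ('xh \<times> 'x) measure) \<rightarrow>\<^sub>M borel"
    unfolding borel_prod[symmetric] by (rule measurable_snd)
  then have "(\<lambda>z. Lab (h (snd z))) \<in> (borel :: ('xh \<times> 'x) measure) \<rightarrow>\<^sub>M count_space UNIV"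
    using measurable_compose[OF measurable_compose[OF _ h] Lab] by blast
  then show "(\<lambda>z. tau q (Lab (h (snd z)))) \<in> (borel :: ('xh \<times> 'x) measure) \<rightarrow>\<^sub>M count_space UNIV"
    by (rule measurable_compose) simp
qed simp

theorem lemma3:
  fixes that :: "'xh::polish_space \<Rightarrow> 'uh::polish_space \<Rightarrow> 'xh measure"
    and hh :: "'xh \<Rightarrow> 'y::metric_space" and xh0 :: 'xh
    and t :: "'x::polish_space \<Rightarrow> 'u::polish_space \<Rightarrow> 'x measure"
    and h :: "'x \<Rightarrow> 'y" and x0 :: 'x
    and Uv :: "'uh \<Rightarrow> 'xh \<Rightarrow> 'x \<Rightarrow> 'u measure"
    and R :: "('xh \<times> 'x) set"
    and W :: "'uh \<Rightarrow> 'xh \<Rightarrow> 'x \<Rightarrow> ('xh \<times> 'x) measure"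
    and eps delta :: real
    and Lab :: "'y \<Rightarrow> 'ap::finite set"
    and tau :: "'q::finite \<Rightarrow> 'ap set \<Rightarrow> 'q" and F :: "'q set"
    and mu :: "'xh \<Rightarrow> 'q \<Rightarrow> 'uh"
    and V :: "'xh \<Rightarrow> 'q \<Rightarrow> real"
    and Vp :: "'xh \<Rightarrow> 'x \<Rightarrow> 'q \<Rightarrow> real"
  assumes Mhat: "gmdp_kernel that hh"
    and M: "gmdp_kernel t h"
    and sim: "approx_sim eps delta that hh xh0 t h x0 Uv R W"
    and Lab_meas: "Lab \<in> borel \<rightarrow>\<^sub>M count_space UNIV"
    and V_range: "\<And>xh q. V xh q \<in> {0..1}"
    and Vp_range: "\<And>xh x q. Vp xh x q \<in> {0..1}"
    and Vp_meas: "\<And>q. (\<lambda>(xh, x). Vp xh x q) \<in> borel_measurable borel"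
    and V_le: "\<And>xh x q. (xh, x) \<in> R \<Longrightarrow> V xh q \<le> Vp xh x q"
  shows "\<forall>(xh, x) \<in> R. \<forall>q.
           robust_op that hh Lab tau F eps delta mu V xh q \<le> bellman_op W h Lab tau F mu Vp xh x q"
proof (intro ballI allI, clarify)
  fix xh x q
  assume xR: "(xh, x) \<in> R"
  let ?W = "W (mu xh q) xh x"
  let ?G = "\<lambda>xh'. Min ((\<lambda>q'. max (indicator F q') (V xh' q')) ` tau_bar tau Lab hh eps q xh')"
  let ?Phi = "\<lambda>z. max (indicator F (tau q (Lab (h (snd z))))) (Vp (fst z) (snd z) (tau q (Lab (h (snd z)))))"
  note W = approx_sim_lifted_kernel[OF sim xR, of "mu xh q"]
  have Phi_nonneg: "0 \<le> ?Phi z" for z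
    by (simp add: le_max_iff_disj)
  have "h \<in> borel_measurable borel"
    using M unfolding gmdp_kernel_def by blast
  then have "?Phi \<in> borel_measurable borel"
    by (rule bellman_integrand_measurable[OF _ Lab_meas Vp_meas])
  then have "?Phi \<in> borel_measurable ?W"
    by (simp add: measurable_cong_sets[OF W(2) refl])
  then have Phi_integrable: "integrable ?W ?Phi"
    using W(1) Vp_range unfolding subprob_space_def
    by (intro finite_measure.integrable_const_bound[where B = 1]) (auto simp: indicator_def)
  have "?G (fst z) \<le> ?Phi z + indicator (- R) z" for z
  proof (cases z)
    case (Pair xh' x')
    show ?thesis
      unfolding Pair fst_conv snd_conv
      using approx_sim_eps_nonneg[OF sim] approx_sim_dist_le[OF sim] V_le V_range Vp_range
      by (intro robust_integrand_le_bellman_integrand) auto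
  qed
  from integral_distr_fst_le[OF W(1-3) Phi_integrable Phi_nonneg this]
  have "integral\<^sup>L (that xh (mu xh q)) ?G - delta \<le> integral\<^sup>L ?W ?Phi"
    using W(4,5) by simp
  then show "robust_op that hh Lab tau F eps delta mu V xh q \<le> bellman_op W h Lab tau F mu Vp xh x q"
    unfolding robust_op_def bellman_op_def
    using Phi_nonneg by (intro clip01_le Bochner_Integration.integral_nonneg) auto
qed

end
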